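(* If $B$ is a set of colors with $|B|=3$, then $\beta_B=4$.
   Context: Let $K_{2,t}$ be the complete bipartite graph with parts $U=\{u_1,u_2\}$ and $W=\{w_1,\dots,w_t\}$. For an edge coloring $c$ of $K_{2,t}$ (adjacent edges may share colors), the color code of $w\in W$ is the ordered pair $(c(u_1w),c(u_2w))$. A tree is rainbow if no two of its edges share a color; for a vertex set $S$, an $S$-tree is a subtree containing $S$; a $3$-rainbow coloring of a graph is an edge coloring such that every set $S$ of three vertices has a rainbow $S$-tree. The color codes of a subset $Y\subseteq W$ are acceptable if the coloring restricted to the subgraph induced by $Y\cup U$ is a $3$-rainbow coloring of that subgraph. For a set of colors $B$, color codes are $B$-limited if both entries of every color code lie in $B$. $\beta_B$ denotes the maximum number of vertices $|Y|$ (equivalently, the maximum $t$) for which there is an edge coloring whose color codes on $Y$ are both $B$-limited and acceptable. *)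

theory Defs
  imports Main
begin

definition edge_rel :: "'v set set \<Rightarrow> ('v \<times> 'v) set" where
  "edge_rel F = {(x, y). {x, y} \<in> F}"

definition is_tree :: "'v set \<Rightarrow> 'v set set \<Rightarrow> bool" where
  "is_tree T F \<longleftrightarrow> finite T \<and> T \<noteq> {} \<and> (\<forall>e\<in>F. card e = 2 \<and> e \<subseteq> T)
     \<and> (\<forall>x\<in>T. \<forall>y\<in>T. (x, y) \<in> (edge_rel F)\<^sup>*) \<and> card F + 1 = card T"

definition rainbow_S_tree :: "'v set \<Rightarrow> 'v set set \<Rightarrow> ('v set \<Rightarrow> 'c) \<Rightarrow> 'v set
    \<Rightarrow> 'v set \<Rightarrow> 'v set set \<Rightarrow> bool" where
  "rainbow_S_tree V E c S T F \<longleftrightarrow> is_tree T F \<and> T \<subseteq> V \<and> F \<subseteq> E \<and> S \<subseteq> T \<and> inj_on c F"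

definition rainbow3 :: "'v set \<Rightarrow> 'v set set \<Rightarrow> ('v set \<Rightarrow> 'c) \<Rightarrow> bool" where
  "rainbow3 V E c \<longleftrightarrow> (\<forall>S. S \<subseteq> V \<and> card S = 3 \<longrightarrow> (\<exists>T F. rainbow_S_tree V E c S T F))"

text \<open>The complete bipartite graph K_{2,t}: U = {U1,U2}, W = {Wv i | i < t}.\<close>
datatype kv = U1 | U2 | Wv nat

definition Wset :: "nat \<Rightarrow> kv set" where
  "Wset t = Wv ` {..<t}"

definition Kedges :: "nat \<Rightarrow> kv set set" where
  "Kedges t = {{U1, w} | w. w \<in> Wset t} \<union> {{U2, w} | w. w \<in> Wset t}"

definition color_code :: "(kv set \<Rightarrow> 'c) \<Rightarrow> kv \<Rightarrow> 'c \<times> 'c" where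
  "color_code c w = (c {U1, w}, c {U2, w})"

definition acceptable :: "nat \<Rightarrow> (kv set \<Rightarrow> 'c) \<Rightarrow> kv set \<Rightarrow> bool" where
  "acceptable t c Y \<longleftrightarrow>
     rainbow3 ({U1, U2} \<union> Y) {e \<in> Kedges t. e \<subseteq> {U1, U2} \<union> Y} c"

definition limited :: "'c set \<Rightarrow> (kv set \<Rightarrow> 'c) \<Rightarrow> kv set \<Rightarrow> bool" where
  "limited B c Y \<longleftrightarrow> (\<forall>w\<in>Y. fst (color_code c w) \<in> B \<and> snd (color_code c w) \<in> B)"

definition beta_set :: "'c set \<Rightarrow> nat set" where
  "beta_set B = {card Y | t c Y. Y \<subseteq> Wset t \<and> limited B c Y \<and> acceptable t c Y}"

definition beta :: "'c set \<Rightarrow> nat" where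
  "beta B = (GREATEST n. n \<in> beta_set B)"

end

theory Submission imports Defs begin

text \<open>Write a(w), b(w) for the two colours of the code of w. A triple of W-vertices on which a
  or b is injective is spanned by a rainbow star at U1 or U2; if moreover the codes are pairwise
  distinct and a(w) \<noteq> b(w), the other triples are served by paths inside a 4-cycle U1 w U2 w'.
  The codes (p,q), (p,r), (q,p), (r,p) satisfy all this. Conversely, with three colours a rainbow
  tree has at most four vertices, so a tree through three W-vertices is a star and a or b is
  injective on every triple. Among five vertices two share their a-colour; b then separates them
  from every other vertex, so b is constant on the other three, which forces a to be injective
  on enough triples that no colour is left for the shared a-colour.\<close>

lemma edge_rel_mono: "F \<subseteq> G \<Longrightarrow> edge_rel F \<subseteq> edge_rel G"
  by (auto simp: edge_rel_def)

lemma edge_in_rtrancl_edge_rel: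
  "{x, y} \<in> F \<Longrightarrow> (x, y) \<in> (edge_rel F)\<^sup>* \<and> (y, x) \<in> (edge_rel F)\<^sup>*"
  by (auto simp: edge_rel_def insert_commute intro!: r_into_rtrancl)

lemma is_tree_singleton: "is_tree {x} {}"
  by (simp add: is_tree_def)

lemma is_tree_add_leaf:
  assumes tree: "is_tree T F" and "u \<in> T" "v \<notin> T"
  shows "is_tree (insert v T) (insert {u, v} F)"
proof -
  let ?F' = "insert {u, v} F"
  have finT: "finite T" and edges: "\<forall>e\<in>F. card e = 2 \<and> e \<subseteq> T"
    and conn: "\<forall>x\<in>T. \<forall>y\<in>T. (x, y) \<in> (edge_rel F)\<^sup>*" and card: "card F + 1 = card T"
    using tree by (auto simp: is_tree_def)
  have "u \<noteq> v" using assms by auto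
  have finF: "finite F" using finite_subset[of F "Pow T"] edges finT by auto
  have "{u, v} \<notin> F" using edges \<open>v \<notin> T\<close> by auto
  have old: "(x, y) \<in> (edge_rel ?F')\<^sup>*" if "x \<in> T" "y \<in> T" for x y
    using conn that rtrancl_mono[OF edge_rel_mono[of F ?F']] by blast
  have uv: "(u, v) \<in> (edge_rel ?F')\<^sup>*" "(v, u) \<in> (edge_rel ?F')\<^sup>*"
    using edge_in_rtrancl_edge_rel[of u v ?F'] by auto
  have "(x, y) \<in> (edge_rel ?F')\<^sup>*" if "x \<in> insert v T" "y \<in> insert v T" for x y
    using that old[of x u] old[of u y] uv \<open>u \<in> T\<close> by (auto intro: rtrancl_trans)
  then show ?thesis
    using finT edges card finF \<open>u \<noteq> v\<close> \<open>u \<in> T\<close> \<open>v \<notin> T\<close> \<open>{u, v} \<notin> F\<close>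
    by (auto simp: is_tree_def)
qed

lemma is_tree_has_neighbour:
  assumes "is_tree T F" "x \<in> T" "y \<in> T" "x \<noteq> y"
  obtains v where "{x, v} \<in> F"
proof -
  have "(x, y) \<in> (edge_rel F)\<^sup>*" using assms by (auto simp: is_tree_def)
  then obtain v where "(x, v) \<in> edge_rel F" using \<open>x \<noteq> y\<close> by (metis converse_rtranclE)
  then show ?thesis using that by (auto simp: edge_rel_def)
qed

lemma card_rainbow_tree_le:
  assumes "rainbow_S_tree V E c S T F" "c ` F \<subseteq> B" "finite B"
  shows "card T \<le> card B + 1"
proof -
  have "card F = card (c ` F)" using assms(1) by (simp add: rainbow_S_tree_def card_image)
  also have "\<dots> \<le> card B" using assms(2,3) by (rule card_mono[rotated])
  finally show ?thesis using assms(1) by (auto simp: rainbow_S_tree_def is_tree_def)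
qed

lemma rainbow_path3:
  assumes "distinct [x, y, z]" "{x, y, z} \<subseteq> V" "{x, y} \<in> E" "{y, z} \<in> E"
    "c {x, y} \<noteq> c {y, z}" "S \<subseteq> {x, y, z}"
  shows "\<exists>T F. rainbow_S_tree V E c S T F"
proof -
  have "is_tree {z, y, x} {{y, z}, {x, y}}"
    using assms(1) by (intro is_tree_add_leaf is_tree_singleton) auto
  then show ?thesis unfolding rainbow_S_tree_def
    using assms by (intro exI[of _ "{z, y, x}"] exI[of _ "{{y, z}, {x, y}}"]) (auto simp: insert_commute)
qed

lemma rainbow_path4:
  assumes "distinct [x, y, z, v]" "{x, y, z, v} \<subseteq> V" "{x, y} \<in> E" "{y, z} \<in> E" "{z, v} \<in> E"
    "distinct [c {x, y}, c {y, z}, c {z, v}]" "S \<subseteq> {x, y, z, v}"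
  shows "\<exists>T F. rainbow_S_tree V E c S T F"
proof -
  have "is_tree {v, z, y, x} {{z, v}, {y, z}, {x, y}}"
    using assms(1) by (intro is_tree_add_leaf is_tree_singleton) auto
  then show ?thesis unfolding rainbow_S_tree_def
    using assms by (intro exI[of _ "{v, z, y, x}"] exI[of _ "{{z, v}, {y, z}, {x, y}}"]) (auto simp: insert_commute)
qed

lemma rainbow_star3:
  assumes "distinct [u, x, y, z]" "{u, x, y, z} \<subseteq> V" "{u, x} \<in> E" "{u, y} \<in> E" "{u, z} \<in> E"
    "distinct [c {u, x}, c {u, y}, c {u, z}]" "S \<subseteq> {u, x, y, z}"
  shows "\<exists>T F. rainbow_S_tree V E c S T F"
proof -
  have "is_tree {z, y, x, u} {{u, z}, {u, y}, {u, x}}"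
    using assms(1) by (intro is_tree_add_leaf is_tree_singleton) auto
  then show ?thesis unfolding rainbow_S_tree_def
    using assms by (intro exI[of _ "{z, y, x, u}"] exI[of _ "{{u, z}, {u, y}, {u, x}}"]) (auto simp: insert_commute)
qed

lemma rainbow_tree_in_4cycle:
  assumes "distinct [u, w, u', w']" "{u, w, u', w'} \<subseteq> V"
    "{u, w} \<in> E" "{u', w} \<in> E" "{u, w'} \<in> E" "{u', w'} \<in> E"
    "c {u, w} \<noteq> c {u', w}" "c {u, w'} \<noteq> c {u', w'}"
    "(c {u, w}, c {u', w}) \<noteq> (c {u, w'}, c {u', w'})"
  shows "\<exists>T F. rainbow_S_tree V E c {u, w, w'} T F"
proof (cases "c {u, w} = c {u, w'}")
  case False
  show ?thesis
    by (rule rainbow_path3[of w u w']) (use assms False in \<open>auto simp: insert_commute\<close>)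
next
  case True
  show ?thesis
    by (rule rainbow_path4[of u w u' w']) (use assms True in \<open>auto simp: insert_commute\<close>)
qed

abbreviation induced_Kedges :: "nat \<Rightarrow> kv set \<Rightarrow> kv set set" where
  "induced_Kedges t Y \<equiv> {e \<in> Kedges t. e \<subseteq> {U1, U2} \<union> Y}"

lemma Wset_not_U: "w \<in> Wset t \<Longrightarrow> w \<noteq> U1 \<and> w \<noteq> U2"
  by (auto simp: Wset_def)

lemma induced_KedgesI:
  assumes "Y \<subseteq> Wset t" "w \<in> Y"
  shows "{U1, w} \<in> induced_Kedges t Y" "{U2, w} \<in> induced_Kedges t Y"
  using assms by (auto simp: Kedges_def)

lemma induced_KedgesE:
  assumes "e \<in> Kedges t" "e \<subseteq> {U1, U2} \<union> Y"
  obtains u w where "e = {u, w}" "u = U1 \<or> u = U2" "w \<in> Y"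
proof -
  obtain u w where "e = {u, w}" "u = U1 \<or> u = U2" "w \<in> Wset t"
    using assms by (auto simp: Kedges_def)
  moreover then have "w \<in> Y" using assms Wset_not_U by auto
  ultimately show ?thesis using that by blast
qed

definition triple_injective :: "('a \<Rightarrow> 'c) \<Rightarrow> ('a \<Rightarrow> 'c) \<Rightarrow> 'a set \<Rightarrow> bool" where
  "triple_injective a b Y \<longleftrightarrow> (\<forall>x\<in>Y. \<forall>y\<in>Y. \<forall>z\<in>Y. distinct [x, y, z] \<longrightarrow>
     distinct [a x, a y, a z] \<or> distinct [b x, b y, b z])"

lemma acceptableI:
  assumes Y: "Y \<subseteq> Wset t"
    and proper: "\<forall>w\<in>Y. c {U1, w} \<noteq> c {U2, w}"
    and inj: "inj_on (color_code c) Y"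
    and triples: "triple_injective (\<lambda>w. c {U1, w}) (\<lambda>w. c {U2, w}) Y"
  shows "acceptable t c Y"
  unfolding acceptable_def rainbow3_def
proof (intro allI impI, elim conjE)
  fix S assume SV: "S \<subseteq> {U1, U2} \<union> Y" and cS: "card S = 3"
  let ?V = "{U1, U2} \<union> Y" and ?E = "induced_Kedges t Y"
  have finS: "finite S" using cS by (simp add: card_ge_0_finite)
  have W: "w \<noteq> U1" "w \<noteq> U2" "{U1, w} \<in> ?E" "{U2, w} \<in> ?E" if "w \<in> Y" for w
    using Y that Wset_not_U induced_KedgesI by blast+
  have one_centre: "\<exists>T F. rainbow_S_tree ?V ?E c S T F"
    if u: "{u, u'} = {U1, U2}" "u \<in> S" "u' \<notin> S" for u u'
  proof -
    have uU: "u = U1 \<and> u' = U2 \<or> u = U2 \<and> u' = U1"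
      using u(1) by (auto simp: doubleton_eq_iff)
    have "card (S - {u}) = 2" using u cS finS by simp
    then obtain w w' where w: "S - {u} = {w, w'}" "w \<noteq> w'" by (auto simp: card_2_iff)
    then have wY: "w \<in> Y" "w' \<in> Y" using SV u by auto
    have d: "distinct [u, w, u', w']" "{u, w, u', w'} \<subseteq> ?V" using uU wY w(2) W by auto
    have e: "{u, w} \<in> ?E" "{u', w} \<in> ?E" "{u, w'} \<in> ?E" "{u', w'} \<in> ?E"
      using uU wY W by auto
    have p: "c {u, w} \<noteq> c {u', w}" "c {u, w'} \<noteq> c {u', w'}"
      using uU wY proper by auto
    have "color_code c w \<noteq> color_code c w'" using inj wY w(2) by (auto dest: inj_onD)
    then have "(c {u, w}, c {u', w}) \<noteq> (c {u, w'}, c {u', w'})"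
      using uU by (auto simp: color_code_def)
    from rainbow_tree_in_4cycle[OF d e p this] show ?thesis
      using w u by (metis Diff_empty Diff_insert0 insert_Diff)
  qed
  consider "U1 \<in> S" "U2 \<in> S" | "U1 \<in> S" "U2 \<notin> S" | "U1 \<notin> S" "U2 \<in> S" | "U1 \<notin> S" "U2 \<notin> S"
    by blast
  then show "\<exists>T F. rainbow_S_tree ?V ?E c S T F"
  proof cases
    case 1
    then have "card (S - {U1, U2}) = 1" using cS finS by (simp add: card_Diff_subset)
    then obtain w where w: "S - {U1, U2} = {w}" by (auto simp: card_1_singleton_iff)
    then have wY: "w \<in> Y" using SV by auto
    have "{w, U2} = {U2, w}" by blast
    then show ?thesis
      using w W[OF wY] proper wY rainbow_path3[of U1 w U2 ?V ?E c S] by auto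
  next
    case 2
    then show ?thesis using one_centre[of U1 U2] by auto
  next
    case 3
    then show ?thesis using one_centre[of U2 U1] by auto
  next
    case 4
    obtain w1 w2 w3 where w: "S = {w1, w2, w3}" "distinct [w1, w2, w3]"
      using cS by (auto simp: card_3_iff)
    then have wY: "w1 \<in> Y" "w2 \<in> Y" "w3 \<in> Y" using SV 4 by auto
    then consider "distinct [c {U1, w1}, c {U1, w2}, c {U1, w3}]"
      | "distinct [c {U2, w1}, c {U2, w2}, c {U2, w3}]"
      using triples w(2) unfolding triple_injective_def by blast
    then show ?thesis
    proof cases
      case 1
      then show ?thesis using w wY W by (intro rainbow_star3[of U1 w1 w2 w3]) auto
    next
      case 2
      then show ?thesis using w wY W by (intro rainbow_star3[of U2 w1 w2 w3]) auto
    qed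
  qed
qed

lemma limited_colours:
  assumes "limited B c Y"
  shows "c ` induced_Kedges t Y \<subseteq> B"
proof
  fix x assume "x \<in> c ` induced_Kedges t Y"
  then obtain e where "e \<in> Kedges t" "e \<subseteq> {U1, U2} \<union> Y" "x = c e" by auto
  then obtain u w where "x = c {u, w}" "u = U1 \<or> u = U2" "w \<in> Y"
    using induced_KedgesE[of e t Y] by blast
  then show "x \<in> B" using assms by (auto simp: limited_def color_code_def)
qed

lemma small_rainbow_tree_is_star:
  assumes Y: "Y \<subseteq> Wset t"
    and rt: "rainbow_S_tree ({U1, U2} \<union> Y) (induced_Kedges t Y) c {w1, w2, w3} T F"
    and cT: "card T \<le> 4" and wY: "w1 \<in> Y" "w2 \<in> Y" "w3 \<in> Y" and wd: "distinct [w1, w2, w3]"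
  obtains u where "u = U1 \<or> u = U2" "F = {{u, w1}, {u, w2}, {u, w3}}"
proof -
  have tree: "is_tree T F" and FE: "F \<subseteq> induced_Kedges t Y" and ST: "{w1, w2, w3} \<subseteq> T"
    using rt by (auto simp: rainbow_S_tree_def)
  have finT: "finite T" and Fsub: "\<forall>e\<in>F. e \<subseteq> T" and cTF: "card F + 1 = card T"
    using tree by (auto simp: is_tree_def)
  have notU: "w \<noteq> U1 \<and> w \<noteq> U2" if "w \<in> Y" for w using Y that Wset_not_U by blast
  obtain u where uF: "{w1, u} \<in> F"
    using is_tree_has_neighbour[OF tree, of w1 w2] ST wd by auto
  then obtain u' w where "{w1, u} = {u', w}" "u' = U1 \<or> u' = U2" "w \<in> Y"
    using FE induced_KedgesE[of "{w1, u}" t Y] by blast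
  then have u: "u = U1 \<or> u = U2" using notU[OF wY(1)] by (auto simp: doubleton_eq_iff)
  have d: "distinct [u, w1, w2, w3]" using u wd wY notU by auto
  have "{u, w1, w2, w3} \<subseteq> T" using uF Fsub ST by auto
  moreover have "card {u, w1, w2, w3} = 4" using d by simp
  ultimately have T: "T = {u, w1, w2, w3}" using card_seteq[OF finT] cT by metis
  have "F \<subseteq> {{u, w1}, {u, w2}, {u, w3}}"
  proof
    fix e assume "e \<in> F"
    then have eK: "e \<in> Kedges t" "e \<subseteq> {U1, U2} \<union> Y" and eT: "e \<subseteq> T"
      using FE Fsub by auto
    obtain u' w where e: "e = {u', w}" "u' = U1 \<or> u' = U2" "w \<in> Y"
      by (rule induced_KedgesE[OF eK])
    have "u' \<noteq> w1" "u' \<noteq> w2" "u' \<noteq> w3" using e(2) notU wY by auto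
    then have "u' = u" using e eT T by auto
    moreover have "w \<in> {w1, w2, w3}" using e eT T u notU[OF e(3)] by auto
    ultimately show "e \<in> {{u, w1}, {u, w2}, {u, w3}}" using e(1) by auto
  qed
  moreover have "card {{u, w1}, {u, w2}, {u, w3}} = card F"
    using cTF T d by (simp add: doubleton_eq_iff)
  ultimately have "F = {{u, w1}, {u, w2}, {u, w3}}" by (simp add: card_subset_eq)
  then show ?thesis using that u by blast
qed

lemma acceptable_imp_triple_injective:
  assumes Y: "Y \<subseteq> Wset t" and lim: "limited B c Y" and B: "finite B" "card B \<le> 3"
    and acc: "acceptable t c Y"
  shows "triple_injective (\<lambda>w. c {U1, w}) (\<lambda>w. c {U2, w}) Y"
  unfolding triple_injective_def
proof (intro ballI impI)
  fix x y z assume xyz: "x \<in> Y" "y \<in> Y" "z \<in> Y" "distinct [x, y, z]"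
  have "{x, y, z} \<subseteq> {U1, U2} \<union> Y" "card {x, y, z} = 3" using xyz by auto
  then obtain T F where rt: "rainbow_S_tree ({U1, U2} \<union> Y) (induced_Kedges t Y) c {x, y, z} T F"
    using acc unfolding acceptable_def rainbow3_def by blast
  have "c ` F \<subseteq> B" using rt limited_colours[OF lim, of t] by (force simp: rainbow_S_tree_def)
  then have "card T \<le> 4" using card_rainbow_tree_le[OF rt _ B(1)] B(2) by fastforce
  then obtain u where u: "u = U1 \<or> u = U2" "F = {{u, x}, {u, y}, {u, z}}"
    using small_rainbow_tree_is_star[OF Y rt _ xyz] by blast
  have "inj_on c F" using rt by (simp add: rainbow_S_tree_def)
  then have "distinct [c {u, x}, c {u, y}, c {u, z}]"
    using u(2) xyz(4) by (auto simp: doubleton_eq_iff dest: inj_onD)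
  then show "distinct [c {U1, x}, c {U1, y}, c {U1, z}]
      \<or> distinct [c {U2, x}, c {U2, y}, c {U2, z}]"
    using u(1) by auto
qed

lemma card_le_4_if_triple_injective:
  assumes B: "finite B" "card B \<le> 3" and ab: "a ` Y \<subseteq> B" "b ` Y \<subseteq> B"
    and tri: "triple_injective a b Y"
  shows "card Y \<le> 4"
proof (rule ccontr)
  assume "\<not> card Y \<le> 4"
  then have cY: "card Y \<ge> 5" and finY: "finite Y" by (auto intro: card_ge_0_finite)
  have tri': "distinct [a x, a y, a z] \<or> distinct [b x, b y, b z]"
    if "x \<in> Y" "y \<in> Y" "z \<in> Y" "distinct [x, y, z]" for x y z
    using tri that unfolding triple_injective_def by blast
  have fill: "B = {x, y, z}" if "{x, y, z} \<subseteq> B" "distinct [x, y, z]" for x y z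
    using card_seteq[OF B(1) that(1)] B(2) that(2) by simp
  have "card (a ` Y) < card Y" using card_mono[OF B(1) ab(1)] B(2) cY by linarith
  then have "\<not> inj_on a Y" using card_image by fastforce
  then obtain x y where xy: "x \<in> Y" "y \<in> Y" "x \<noteq> y" "a x = a y" unfolding inj_on_def by blast
  have "card (Y - {x, y}) \<ge> 3" using cY finY xy by (simp add: card_Diff_subset)
  then obtain Z where "Z \<subseteq> Y - {x, y}" "card Z = 3" by (meson obtain_subset_with_card_n)
  then obtain z1 z2 z3 where z: "z1 \<in> Y" "z2 \<in> Y" "z3 \<in> Y" "distinct [z1, z2, z3]"
    "z1 \<notin> {x, y}" "z2 \<notin> {x, y}" "z3 \<notin> {x, y}"
    by (auto simp: card_3_iff)
  have bz: "distinct [b x, b y, b z]" if "z \<in> Y" "z \<notin> {x, y}" for z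
    using tri'[of x y z] that xy by auto
  have "B = {b x, b y, b z1}" using fill[of "b x" "b y" "b z1"] ab xy z bz[of z1] by auto
  then have b_const: "b z2 = b z1" "b z3 = b z1" using ab z bz[of z2] bz[of z3] by auto
  then have "distinct [a z1, a z2, a z3]" using tri'[of z1 z2 z3] z by auto
  then have "B = {a z1, a z2, a z3}" using fill[of "a z1" "a z2" "a z3"] ab z by auto
  moreover have "a x \<notin> {a z1, a z2, a z3}"
    using tri'[of x z1 z2] tri'[of x z2 z3] xy z b_const by auto
  ultimately show False using ab xy by auto
qed

lemma acceptable_Wset_4:
  assumes "distinct [p, q, r]"
  obtains c :: "kv set \<Rightarrow> 'c" where "limited {p, q, r} c (Wset 4)" "acceptable 4 c (Wset 4)"
proof -
  \<comment> \<open>Wv 0, \<dots>, Wv 3 receive the codes (p,q), (p,r), (q,p), (r,p)\<close>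
  define c :: "kv set \<Rightarrow> 'c" where "c e =
    (if U1 \<in> e then (if Wv 0 \<in> e \<or> Wv 1 \<in> e then p else if Wv 2 \<in> e then q else r)
     else (if Wv 0 \<in> e then q else if Wv 1 \<in> e then r else p))" for e
  have W4: "Wset 4 = {Wv 0, Wv 1, Wv 2, Wv 3}"
    by (auto simp: Wset_def numeral_eq_Suc lessThan_Suc)
  have "limited {p, q, r} c (Wset 4)"
    unfolding limited_def W4 color_code_def c_def by auto
  moreover have "acceptable 4 c (Wset 4)"
  proof (rule acceptableI)
    show "\<forall>w\<in>Wset 4. c {U1, w} \<noteq> c {U2, w}"
      using assms unfolding W4 c_def by auto
    show "inj_on (color_code c) (Wset 4)"
      using assms unfolding W4 color_code_def c_def by (auto simp: inj_on_def)
    show "triple_injective (\<lambda>w. c {U1, w}) (\<lambda>w. c {U2, w}) (Wset 4)"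
      using assms unfolding W4 triple_injective_def c_def by auto
  qed simp
  ultimately show ?thesis using that by blast
qed

theorem claim3:
  fixes B :: "'c set"
  assumes "card B = 3"
  shows "4 \<in> beta_set B \<and> (\<forall>n\<in>beta_set B. n \<le> 4) \<and> beta B = 4"
proof -
  have finB: "finite B" using assms by (simp add: card_ge_0_finite)
  have upper: "\<forall>n\<in>beta_set B. n \<le> 4"
  proof
    fix n assume "n \<in> beta_set B"
    then obtain t c Y where Y: "n = card Y" "Y \<subseteq> Wset t" "limited B c Y" "acceptable t c Y"
      by (auto simp: beta_set_def)
    have colours: "(\<lambda>w. c {U1, w}) ` Y \<subseteq> B" "(\<lambda>w. c {U2, w}) ` Y \<subseteq> B"
      using Y(3) by (auto simp: limited_def color_code_def)
    have "triple_injective (\<lambda>w. c {U1, w}) (\<lambda>w. c {U2, w}) Y"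
      using acceptable_imp_triple_injective[OF Y(2,3) finB _ Y(4)] assms by simp
    then show "n \<le> 4"
      using card_le_4_if_triple_injective[OF finB _ colours] Y(1) assms by simp
  qed
  obtain p q r where B: "B = {p, q, r}" "distinct [p, q, r]"
    using assms by (auto simp: card_3_iff)
  obtain c :: "kv set \<Rightarrow> 'c" where "limited B c (Wset 4)" "acceptable 4 c (Wset 4)"
    using acceptable_Wset_4[OF B(2)] B(1) by blast
  moreover have "card (Wset 4) = 4" by (simp add: Wset_def card_image inj_on_def)
  ultimately have four: "4 \<in> beta_set B" unfolding beta_set_def by force
  have "beta B = 4" unfolding beta_def by (rule Greatest_equality) (use four upper in auto)
  with four upper show ?thesis by blast
qed

end
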